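(* Let $p$ be a prime, $a\ge 1$ an integer, and $n=p^a$. With $L$ and $R$ the matrices indexed by $P(n)$ defined in the context, \[\dim\ker (RL^{-1}) \ge \binom{a}{2}=\frac{a(a-1)}{2}.\]
   Context: Let $\phi$ denote Euler's totient function. For a positive integer $n$ let $P(n)=\{(i,j): j\mid n,\ i\mid j\}$. Define square matrices $L$ and $R$ with rows and columns indexed by $P(n)$ as follows. For a row index $(i,j)$ and a column index $(d,c)$: $L_{(i,j)}^{(d,c)} = \phi(d)\,\frac{n}{\operatorname{lcm}(j,c)}$ if $d\mid i$ and $j\mid \operatorname{lcm}(i,c)$, and $0$ otherwise. For the row $(i,j)$, let $v$ be the largest divisor of $i$ coprime with $j/i$ and put $u=i/v$. Then $R_{(i,j)}^{(e,c)} = u\,\phi(ev/j)\,\frac{n}{\operatorname{lcm}(j,c)}$ if $(j/v)\mid e$, $e\mid j$ and $j\mid\operatorname{lcm}(i,c)$, and $0$ otherwise. The matrix $L$ is invertible. *)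

theory Defs
  imports "HOL-Number_Theory.Number_Theory" "HOL-Library.Product_Lexorder"
    "Jordan_Normal_Form.Matrix_Kernel" "Jordan_Normal_Form.Gauss_Jordan_Elimination"
begin

definition Pset :: "nat \<Rightarrow> (nat \<times> nat) set" where
  "Pset n = {(i, j). j dvd n \<and> i dvd j}"

text \<open>A fixed enumeration of P(n) (lexicographic order); the kernel dimension
  does not depend on the chosen enumeration.\<close>
definition Plist :: "nat \<Rightarrow> (nat \<times> nat) list" where
  "Plist n = sorted_list_of_set (Pset n)"

definition L_entry :: "nat \<Rightarrow> nat \<times> nat \<Rightarrow> nat \<times> nat \<Rightarrow> rat" where
  "L_entry n r cl = (case r of (i, j) \<Rightarrow> case cl of (d, c) \<Rightarrow>
     if d dvd i \<and> j dvd lcm i c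
     then of_nat (totient d) * of_nat (n div lcm j c) else 0)"

definition vpart :: "nat \<Rightarrow> nat \<Rightarrow> nat" where
  "vpart i j = Max {v. v dvd i \<and> coprime v (j div i)}"

definition R_entry :: "nat \<Rightarrow> nat \<times> nat \<Rightarrow> nat \<times> nat \<Rightarrow> rat" where
  "R_entry n r cl = (case r of (i, j) \<Rightarrow> case cl of (e, c) \<Rightarrow>
     let v = vpart i j; u = i div v in
     if (j div v) dvd e \<and> e dvd j \<and> j dvd lcm i c
     then of_nat u * of_nat (totient (e * v div j)) * of_nat (n div lcm j c) else 0)"

definition Lmat :: "nat \<Rightarrow> rat mat" where
  "Lmat n = mat (length (Plist n)) (length (Plist n))
     (\<lambda>(a, b). L_entry n (Plist n ! a) (Plist n ! b))"

definition Rmat :: "nat \<Rightarrow> rat mat" where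
  "Rmat n = mat (length (Plist n)) (length (Plist n))
     (\<lambda>(a, b). R_entry n (Plist n ! a) (Plist n ! b))"

end

theory Submission
  imports Defs
begin

text \<open>For \<open>n = p^a\<close> the index set \<open>P(n)\<close> consists of the \<open>(a+1)(a+2)/2\<close> pairs
  \<open>(p^s, p^t)\<close> with \<open>s \<le> t \<le> a\<close>. The matrix \<open>L\<close> is triangular with respect to the
  weight \<open>s(a+1) + (a - t)\<close> and has nonzero diagonal, so it is invertible. For \<open>s < t\<close> the
  largest divisor of \<open>p^s\<close> coprime to \<open>p^(t-s)\<close> is \<open>1\<close>, which makes the row \<open>(p^s, p^t)\<close>
  of \<open>R\<close> equal to \<open>p^s\<close> times the row \<open>(1, p^t)\<close>. Hence all rows of \<open>R\<close>, and of
  \<open>R L\<^sup>-\<^sup>1\<close>, are multiples of the \<open>2a + 1\<close> rows indexed by \<open>(p^s, p^s)\<close> and \<open>(1, p^t)\<close>,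
  and the kernel has dimension at least \<open>(a+1)(a+2)/2 - (2a+1) = a(a-1)/2\<close>.\<close>

lemma kernel_dim_ge_dim_col_minus_dim_row:
  fixes D :: "'a::field mat"
  assumes D: "D \<in> carrier_mat k N"
  shows "N - k \<le> kernel_dim D"
proof -
  let ?C = "gauss_jordan_single D"
  from gauss_jordan_single[OF D refl]
  obtain P Q where CP: "?C = P * D" and QP: "Q * P = 1\<^sub>m k" and
    P: "P \<in> carrier_mat k k" and Q: "Q \<in> carrier_mat k k" and C: "?C \<in> carrier_mat k N"
    and ref: "row_echelon_form ?C" by auto
  interpret K: kernel k N ?C by (unfold_locales, rule C)
  from mat_kernel_mult_eq[OF D P Q QP, folded CP]
  have "kernel_dim D = K.dim" unfolding kernel_dim_def using D by simp
  also have "\<dots> = N - card {i. i < k \<and> row ?C i \<noteq> 0\<^sub>v N}"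
    using find_base_vectors[OF ref C] by auto
  also have "card {i. i < k \<and> row ?C i \<noteq> 0\<^sub>v N} \<le> k"
    using card_mono[of "{..<k}" "{i. i < k \<and> row ?C i \<noteq> 0\<^sub>v N}"] by auto
  hence "N - k \<le> N - card {i. i < k \<and> row ?C i \<noteq> 0\<^sub>v N}" by simp
  finally show ?thesis by simp
qed

lemma kernel_dim_mono:
  fixes D :: "'a::field mat"
  assumes D: "D \<in> carrier_mat k N" and A: "A \<in> carrier_mat m N"
    and sub: "mat_kernel D \<subseteq> mat_kernel A"
  shows "kernel_dim D \<le> kernel_dim A"
proof -
  interpret KD: kernel k N D by (unfold_locales, rule D)
  interpret KA: kernel m N A by (unfold_locales, rule A)
  obtain B where fB: "finite B" and bB: "KD.basis B" using kernel_basis_exists[OF D] by auto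
  have B: "B \<subseteq> mat_kernel D" and li: "KD.lin_indpt B" using bB unfolding KD.Ker.basis_def by auto
  have BA: "B \<subseteq> mat_kernel A" using B sub by auto
  have liA: "KA.lin_indpt B" using li KD.lindep_same[OF B] KA.lindep_same[OF BA] by simp
  obtain BA' where "finite BA'" "KA.basis BA'" using kernel_basis_exists[OF A] by auto
  then have "KA.Ker.fin_dim" unfolding KA.Ker.fin_dim_def KA.Ker.basis_def by auto
  then have "card B \<le> KA.dim" using KA.Ker.li_le_dim(2)[OF _ BA liA] by simp
  then show ?thesis using KD.Ker.dim_basis[OF fB bB] by simp
qed

text \<open>The rows indexed by \<open>S\<close> form a \<open>card S \<times> N\<close> matrix with the same kernel.\<close>

lemma kernel_dim_ge_if_rows_multiples:
  fixes A :: "'a::field mat"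
  assumes A: "A \<in> carrier_mat m N" and S: "S \<subseteq> {..<m}"
    and rows: "\<And>i. i < m \<Longrightarrow> \<exists>i'\<in>S. \<exists>c. row A i = c \<cdot>\<^sub>v row A i'"
  shows "N - card S \<le> kernel_dim A"
proof -
  have fS: "finite S" using S finite_subset by blast
  define rs where "rs = sorted_list_of_set S"
  define D where "D = mat_of_rows N (map (row A) rs)"
  have set_rs: "set rs = S" and len_rs: "length rs = card S"
    using fS unfolding rs_def by auto
  have D: "D \<in> carrier_mat (card S) N" unfolding D_def using mat_of_rows_carrier(1) len_rs
    by (metis length_map)
  have "mat_kernel D \<subseteq> mat_kernel A"
  proof
    fix v assume v: "v \<in> mat_kernel D"
    have vN: "v \<in> carrier_vec N" and Dv: "D *\<^sub>v v = 0\<^sub>v (card S)" using mat_kernelD[OF D v] by auto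
    have S_orth: "row A i' \<bullet> v = 0" if i': "i' \<in> S" for i'
    proof -
      obtain r where r: "r < length rs" "rs ! r = i'" using i' set_rs in_set_conv_nth[of i' rs] by blast
      have "row A i' \<in> carrier_vec N" using A by (simp add: carrier_vecI)
      then have "row D r = row A i'" unfolding D_def using r by simp
      moreover have "(D *\<^sub>v v) $ r = row D r \<bullet> v" using D r len_rs by simp
      ultimately show ?thesis using Dv r len_rs by simp
    qed
    have "A *\<^sub>v v = 0\<^sub>v m"
    proof (rule eq_vecI)
      fix i assume "i < dim_vec (0\<^sub>v m :: 'a vec)"
      then have i: "i < m" by simp
      obtain i' c where i': "i' \<in> S" and c: "row A i = c \<cdot>\<^sub>v row A i'" using rows[OF i] by blast
      have "(A *\<^sub>v v) $ i = c * (row A i' \<bullet> v)" using A i vN c by simp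
      then show "(A *\<^sub>v v) $ i = 0\<^sub>v m $ i" using S_orth[OF i'] i by simp
    qed (use A in simp)
    then show "v \<in> mat_kernel A" by (rule mat_kernelI[OF A vN])
  qed
  then show ?thesis
    using kernel_dim_ge_dim_col_minus_dim_row[OF D] kernel_dim_mono[OF D A] by linarith
qed

lemma row_mult_eq_smult:
  assumes A: "A \<in> carrier_mat m n" and B: "B \<in> carrier_mat n k"
    and i: "i < m" and i': "i' < m" and c: "row A i = c \<cdot>\<^sub>v row A i'"
  shows "row (A * B) i = c \<cdot>\<^sub>v row (A * B) i'"
  by (rule eq_vecI) (use A B i i' c in \<open>auto simp: smult_scalar_prod_distrib[of _ n]\<close>)

lemma det_ne_zero_if_triangular:
  fixes A :: "'a::field mat" and rk :: "nat \<Rightarrow> nat"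
  assumes A: "A \<in> carrier_mat N N"
    and diag: "\<And>i. i < N \<Longrightarrow> A $$ (i, i) \<noteq> 0"
    and tri: "\<And>i j. i < N \<Longrightarrow> j < N \<Longrightarrow> j \<noteq> i \<Longrightarrow> A $$ (i, j) \<noteq> 0 \<Longrightarrow> rk j < rk i"
  shows "det A \<noteq> 0"
proof -
  have "v = 0\<^sub>v N" if v: "v \<in> carrier_vec N" and Av: "A *\<^sub>v v = 0\<^sub>v N" for v
  proof -
    have "v $ i = 0" if "i < N" for i
      using that
    proof (induction "rk i" arbitrary: i rule: less_induct)
      case less
      have others: "A $$ (i, l) * v $ l = 0" if l: "l \<in> {0..<N} - {i}" for l
        using less.hyps[of l] tri[OF less.prems, of l] l by fastforce
      have "0 = (A *\<^sub>v v) $ i" using Av less.prems by simp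
      also have "\<dots> = (\<Sum>l\<in>{0..<N}. A $$ (i, l) * v $ l)"
        using A v less.prems by (simp add: scalar_prod_def)
      also have "\<dots> = A $$ (i, i) * v $ i"
        using less.prems others by (simp add: sum.remove[of _ i] sum.neutral)
      finally show ?case using diag[OF less.prems] by simp
    qed
    then show ?thesis using v by (intro eq_vecI) auto
  qed
  then show ?thesis using det_0_iff_vec_prod_zero_field[OF A] by blast
qed

lemma mat_inverse_if_det_ne_zero:
  fixes A :: "'a::field mat"
  assumes A: "A \<in> carrier_mat n n" and det: "det A \<noteq> 0"
  obtains B where "mat_inverse A = Some B" and "B \<in> carrier_mat n n"
proof -
  have "mat_inverse A \<noteq> None"
  proof
    assume "mat_inverse A = None"
    then show False using mat_inverse(1)[OF A, of "()"] det_non_zero_imp_unit[OF A det, of "()"] by blast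
  qed
  then show thesis using mat_inverse(2)[OF A] that by blast
qed

lemma lcm_power_power_nat: "lcm (p ^ m) (p ^ n) = (p::nat) ^ max m n"
proof (cases "m \<le> n")
  case True
  then show ?thesis by (simp add: le_imp_power_dvd lcm_proj2_if_dvd max_def)
next
  case False
  then show ?thesis by (simp add: le_imp_power_dvd lcm_proj1_if_dvd max_def)
qed

lemma prime_power_dvd_prime_power_iff: "prime (p::nat) \<Longrightarrow> p ^ m dvd p ^ n \<longleftrightarrow> m \<le> n"
  by (rule dvd_power_iff_le) (simp add: prime_ge_2_nat)

lemma Pset_prime_power:
  assumes p: "prime p"
  shows "Pset (p ^ a) = (\<lambda>(s, t). (p ^ s, p ^ t)) ` {(s, t). s \<le> t \<and> t \<le> a}"
proof safe
  fix i j assume "(i, j) \<in> Pset (p ^ a)"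
  then have "j dvd p ^ a" "i dvd j" unfolding Pset_def by auto
  then obtain s t where "t \<le> a" "j = p ^ t" "s \<le> t" "i = p ^ s"
    using divides_primepow_nat[OF p] by metis
  then show "(i, j) \<in> (\<lambda>(s, t). (p ^ s, p ^ t)) ` {(s, t). s \<le> t \<and> t \<le> a}" by auto
next
  fix s t assume "s \<le> t" "t \<le> a"
  then show "(p ^ s, p ^ t) \<in> Pset (p ^ a)"
    unfolding Pset_def using prime_power_dvd_prime_power_iff[OF p] by auto
qed

lemma card_exponent_pairs: "card {(s, t). s \<le> t \<and> t \<le> a} = (a choose 2) + 2 * a + 1"
proof (induction a)
  case 0
  have "{(s, t). s \<le> t \<and> t \<le> (0::nat)} = {(0, 0)}" by auto
  then show ?case by simp
next
  case (Suc a)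
  have split: "{(s, t). s \<le> t \<and> t \<le> Suc a} =
      {(s, t). s \<le> t \<and> t \<le> a} \<union> (\<lambda>s. (s, Suc a)) ` {..Suc a}" by auto
  have fin: "finite {(s, t). s \<le> t \<and> t \<le> a}"
    by (rule finite_subset[of _ "{..a} \<times> {..a}"]) auto
  have "card {(s, t). s \<le> t \<and> t \<le> Suc a} =
      card {(s, t). s \<le> t \<and> t \<le> a} + card ((\<lambda>s. (s, Suc a)) ` {..Suc a})"
    unfolding split by (rule card_Un_disjoint) (use fin in auto)
  also have "card ((\<lambda>s. (s, Suc a)) ` {..Suc a}) = a + 2"
    by (subst card_image) (auto simp: inj_on_def)
  moreover have "Suc a choose 2 = (a choose 2) + a" by (simp add: numeral_2_eq_2)
  ultimately show ?case using Suc by simp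
qed

lemma distinct_Plist: "distinct (Plist n)"
  unfolding Plist_def by simp

lemma Plist_prime_power:
  assumes p: "prime p"
  shows "set (Plist (p ^ a)) = (\<lambda>(s, t). (p ^ s, p ^ t)) ` {(s, t). s \<le> t \<and> t \<le> a}"
proof -
  have "finite {(s, t). s \<le> t \<and> t \<le> a}"
    by (rule finite_subset[of _ "{..a} \<times> {..a}"]) auto
  then show ?thesis unfolding Plist_def Pset_prime_power[OF p] by simp
qed

lemma length_Plist_prime_power:
  assumes p: "prime p"
  shows "length (Plist (p ^ a)) = (a choose 2) + 2 * a + 1"
proof -
  have "inj_on (\<lambda>(s, t). (p ^ s, p ^ t)) {(s, t). s \<le> t \<and> t \<le> a}"
    using prime_gt_1_nat[OF p] by (auto simp: inj_on_def power_inject_exp)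
  then show ?thesis
    using distinct_card[OF distinct_Plist, of "p ^ a"]
    by (simp add: Plist_prime_power[OF p] card_image card_exponent_pairs)
qed

lemma nth_Plist_prime_power:
  assumes p: "prime p" and j: "j < length (Plist (p ^ a))"
  obtains s t where "s \<le> t" "t \<le> a" "Plist (p ^ a) ! j = (p ^ s, p ^ t)"
  using nth_mem[OF j] that unfolding Plist_prime_power[OF p] by auto

lemma card_nth_mem_le:
  assumes "distinct xs" and "finite Q"
  shows "card {i. i < length xs \<and> xs ! i \<in> Q} \<le> card Q"
proof -
  have "card {i. i < length xs \<and> xs ! i \<in> Q} = length (filter (\<lambda>x. x \<in> Q) xs)"
    by (simp add: length_filter_conv_card)
  also have "\<dots> = card (set (filter (\<lambda>x. x \<in> Q) xs))"
    using distinct_card[of "filter (\<lambda>x. x \<in> Q) xs"] assms(1) by simp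
  also have "\<dots> \<le> card Q" using assms(2) by (intro card_mono) auto
  finally show ?thesis .
qed

lemma L_entry_prime_power_ne_zero_imp:
  assumes p: "prime p" and ne: "L_entry n (p ^ s, p ^ t) (p ^ x, p ^ y) \<noteq> 0"
  shows "x \<le> s \<and> t \<le> max s y"
  using ne unfolding L_entry_def
  by (auto simp: lcm_power_power_nat prime_power_dvd_prime_power_iff[OF p] split: if_splits)

lemma L_entry_prime_power_diag_ne_zero:
  assumes p: "prime p" and "s \<le> t" "t \<le> a"
  shows "L_entry (p ^ a) (p ^ s, p ^ t) (p ^ s, p ^ t) \<noteq> 0"
proof -
  have "p ^ t dvd p ^ a" using assms prime_power_dvd_prime_power_iff[OF p] by simp
  then have "p ^ a div p ^ t \<noteq> 0" using prime_gt_0_nat[OF p] by (simp add: dvd_div_eq_0_iff)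
  moreover have "totient (p ^ s) \<noteq> 0" using prime_gt_0_nat[OF p] by simp
  ultimately show ?thesis unfolding L_entry_def
    using assms by (simp add: lcm_power_power_nat prime_power_dvd_prime_power_iff[OF p])
qed

lemma det_Lmat_prime_power_ne_zero:
  assumes p: "prime p"
  shows "det (Lmat (p ^ a)) \<noteq> 0"
proof -
  let ?P = "Plist (p ^ a)" and ?N = "length (Plist (p ^ a))"
  define rk where
    "rk j = multiplicity p (fst (?P ! j)) * (a + 1) + (a - multiplicity p (snd (?P ! j)))" for j
  have entry: "Lmat (p ^ a) $$ (i, j) = L_entry (p ^ a) (?P ! i) (?P ! j)"
    if "i < ?N" "j < ?N" for i j
    using that unfolding Lmat_def by simp
  show ?thesis
  proof (rule det_ne_zero_if_triangular[where rk = rk])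
    show "Lmat (p ^ a) \<in> carrier_mat ?N ?N" unfolding Lmat_def by simp
  next
    fix i assume i: "i < ?N"
    obtain s t where "s \<le> t" "t \<le> a" "?P ! i = (p ^ s, p ^ t)"
      using nth_Plist_prime_power[OF p i] .
    then show "Lmat (p ^ a) $$ (i, i) \<noteq> 0"
      using entry[OF i i] L_entry_prime_power_diag_ne_zero[OF p] by simp
  next
    fix i j assume i: "i < ?N" and j: "j < ?N" and ji: "j \<noteq> i"
      and ne: "Lmat (p ^ a) $$ (i, j) \<noteq> 0"
    obtain s t where st: "s \<le> t" "t \<le> a" "?P ! i = (p ^ s, p ^ t)"
      using nth_Plist_prime_power[OF p i] .
    obtain x y where xy: "x \<le> y" "y \<le> a" "?P ! j = (p ^ x, p ^ y)"
      using nth_Plist_prime_power[OF p j] .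
    have "?P ! j \<noteq> ?P ! i" using i j ji distinct_Plist by (simp add: nth_eq_iff_index_eq)
    then have "(x, y) \<noteq> (s, t)" using st(3) xy(3) by auto
    moreover have "x \<le> s" "t \<le> max s y"
      using L_entry_prime_power_ne_zero_imp[OF p] ne entry[OF i j] st(3) xy(3) by auto
    moreover have "(x + 1) * (a + 1) \<le> s * (a + 1)" if "x < s"
      using that by (intro mult_le_mono1) simp
    ultimately show "rk j < rk i"
      unfolding rk_def using st xy p by (fastforce simp: max_def split: if_splits)
  qed
qed

lemma vpart_prime_power_less:
  assumes p: "prime p" and st: "s < t"
  shows "vpart (p ^ s) (p ^ t) = 1"
proof -
  have "{v. v dvd p ^ s \<and> coprime v (p ^ t div p ^ s)} = {1}"
  proof safe
    fix v assume v: "v dvd p ^ s" "coprime v (p ^ t div p ^ s)"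
    then obtain k where k: "k \<le> s" "v = p ^ k" using divides_primepow_nat[OF p] by auto
    have "p ^ t div p ^ s = p ^ (t - s)"
      using p st by (simp add: power_diff prime_gt_0_nat)
    then have "p dvd p ^ t div p ^ s" using st by simp
    then have "\<not> p dvd v" using v(2) p by (metis coprime_common_divisor_nat not_prime_1)
    then show "v = 1" using k by (cases k) auto
  qed auto
  then show ?thesis unfolding vpart_def by simp
qed

text \<open>Both rows have \<open>v = 1\<close>, so only the factor \<open>u = i\<close> and the condition
  \<open>j | lcm i c\<close> differ, and the latter does not depend on \<open>i = p^s\<close> for \<open>s < t\<close>.\<close>

lemma R_entry_prime_power_scale:
  assumes p: "prime p" and st: "s < t"
  shows "R_entry n (p ^ s, p ^ t) (e, p ^ y) = of_nat (p ^ s) * R_entry n (1, p ^ t) (e, p ^ y)"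
proof -
  have "p ^ t dvd lcm (p ^ s) (p ^ y) \<longleftrightarrow> p ^ t dvd lcm 1 (p ^ y)"
    using st by (simp add: lcm_power_power_nat prime_power_dvd_prime_power_iff[OF p] max_def)
  moreover have "vpart (Suc 0) (p ^ t) = 1" using vpart_prime_power_less[OF p, of 0 t] st by simp
  ultimately show ?thesis
    unfolding R_entry_def Let_def by (simp add: vpart_prime_power_less[OF p st])
qed

lemma Rmat_prime_power_rows_multiples:
  assumes p: "prime p"
  obtains S where "S \<subseteq> {..<length (Plist (p ^ a))}" and "card S \<le> 2 * a + 1"
    and "\<And>i. i < length (Plist (p ^ a)) \<Longrightarrow>
      \<exists>i'\<in>S. \<exists>c. row (Rmat (p ^ a)) i = c \<cdot>\<^sub>v row (Rmat (p ^ a)) i'"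
proof -
  let ?P = "Plist (p ^ a)" and ?N = "length (Plist (p ^ a))" and ?R = "Rmat (p ^ a)"
  define Q where "Q = (\<lambda>s. (p ^ s, p ^ s)) ` {..a} \<union> (\<lambda>t. (1, p ^ t)) ` {1..a}"
  define S where "S = {i. i < ?N \<and> ?P ! i \<in> Q}"
  have "card S \<le> card Q"
    unfolding S_def by (rule card_nth_mem_le[OF distinct_Plist]) (simp add: Q_def)
  also have "\<dots> \<le> card ((\<lambda>s. (p ^ s, p ^ s)) ` {..a}) + card ((\<lambda>t. (1::nat, p ^ t)) ` {1..a})"
    unfolding Q_def by (rule card_Un_le)
  also have "\<dots> \<le> card {..a} + card {1..a}" by (intro add_mono card_image_le) auto
  finally have "card S \<le> 2 * a + 1" by simp
  moreover have "\<exists>i'\<in>S. \<exists>c. row ?R i = c \<cdot>\<^sub>v row ?R i'" if i: "i < ?N" for i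
  proof -
    obtain s t where st: "s \<le> t" "t \<le> a" "?P ! i = (p ^ s, p ^ t)"
      using nth_Plist_prime_power[OF p i] .
    show ?thesis
    proof (cases "s = t")
      case True
      then have "i \<in> S" using i st unfolding S_def Q_def by auto
      then show ?thesis by (intro bexI[of _ i] exI[of _ 1]) auto
    next
      case False
      have "(1, p ^ t) \<in> set ?P" unfolding Plist_prime_power[OF p] using st
        by (intro image_eqI[of _ _ "(0, t)"]) auto
      then obtain i' where i': "i' < ?N" "?P ! i' = (1, p ^ t)" by (metis in_set_conv_nth)
      have "i' \<in> S" using i' False st unfolding S_def Q_def by auto
      moreover have "row ?R i = of_nat (p ^ s) \<cdot>\<^sub>v row ?R i'"
      proof (rule eq_vecI)
        fix j assume "j < dim_vec (of_nat (p ^ s) \<cdot>\<^sub>v row ?R i')"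
        then have j: "j < ?N" unfolding Rmat_def by simp
        obtain x y where "?P ! j = (p ^ x, p ^ y)" using nth_Plist_prime_power[OF p j] by blast
        then show "row ?R i $ j = (of_nat (p ^ s) \<cdot>\<^sub>v row ?R i') $ j"
          using i i' j st False R_entry_prime_power_scale[OF p] unfolding Rmat_def by simp
      qed (simp add: Rmat_def)
      ultimately show ?thesis by blast
    qed
  qed
  moreover have "S \<subseteq> {..<?N}" unfolding S_def by auto
  ultimately show ?thesis using that by blast
qed

theorem proposition5p1:
  fixes p a n :: nat
  assumes "prime p" and "a \<ge> 1" and "n = p ^ a"
  shows "kernel_dim (Rmat n * the (mat_inverse (Lmat n))) \<ge> a choose 2"
proof -
  let ?N = "length (Plist n)"
  have L: "Lmat n \<in> carrier_mat ?N ?N" and R: "Rmat n \<in> carrier_mat ?N ?N"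
    unfolding Lmat_def Rmat_def by auto
  obtain B where inv: "mat_inverse (Lmat n) = Some B" and B: "B \<in> carrier_mat ?N ?N"
    using mat_inverse_if_det_ne_zero[OF L] det_Lmat_prime_power_ne_zero assms by metis
  obtain S where S: "S \<subseteq> {..<?N}" and card_S: "card S \<le> 2 * a + 1"
    and rows: "\<And>i. i < ?N \<Longrightarrow> \<exists>i'\<in>S. \<exists>c. row (Rmat n) i = c \<cdot>\<^sub>v row (Rmat n) i'"
    using Rmat_prime_power_rows_multiples assms by metis
  have "\<exists>i'\<in>S. \<exists>c. row (Rmat n * B) i = c \<cdot>\<^sub>v row (Rmat n * B) i'" if "i < ?N" for i
    using rows[OF that] row_mult_eq_smult[OF R B that] S by blast
  then have "?N - card S \<le> kernel_dim (Rmat n * B)"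
    using kernel_dim_ge_if_rows_multiples[OF mult_carrier_mat[OF R B] S] by blast
  then show ?thesis
    using inv card_S length_Plist_prime_power assms by fastforce
qed

end
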